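(* Let $N\ge 1$ be an integer, let $\alpha$ be a real number with $1/N\le\alpha\le 1$, and let $P>0$. Define $$\mathcal{D}_1=\{\mathbf{x}\in\mathbb{C}^N : \|\mathbf{x}\|_2^2\le P\},\qquad \mathcal{D}_2=\{\mathbf{x}\in\mathbb{C}^N : |x_i|^2\le \alpha\|\mathbf{x}\|_2^2 \text{ for all } i=1,\dots,N\},$$ and $\mathcal{D}=\mathcal{D}_1\cap\mathcal{D}_2$. Let $\mathbf{z}\in\mathbb{C}^N$ and let $\mathbf{x}'$ be an orthogonal projection of $\mathbf{z}$ onto $\mathcal{D}_2$, i.e., $\mathbf{x}'\in\mathcal{D}_2$ and $\|\mathbf{z}-\mathbf{x}'\|_2\le\|\mathbf{z}-\mathbf{w}\|_2$ for all $\mathbf{w}\in\mathcal{D}_2$. Set $\mathbf{x}=\mathbf{x}'$ if $\mathbf{x}'=\mathbf{0}$, and otherwise $\mathbf{x}=\min\{1,\sqrt{P}/\|\mathbf{x}'\|_2\}\,\mathbf{x}'$ (the orthogonal projection of $\mathbf{x}'$ onto $\mathcal{D}_1$). Then $\mathbf{x}$ is an orthogonal projection of $\mathbf{z}$ onto $\mathcal{D}$, i.e., $\mathbf{x}\in\mathcal{D}$ and $\|\mathbf{z}-\mathbf{x}\|_2\le\|\mathbf{z}-\mathbf{w}\|_2$ for all $\mathbf{w}\in\mathcal{D}$.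
   Context: $\|\cdot\|_2$ is the Euclidean norm on $\mathbb{C}^N$. The set $\mathcal{D}_2$ is the set of vectors whose peak-to-average power ratio $N\|\mathbf{x}\|_\infty^2/\|\mathbf{x}\|_2^2$ is at most $\rho=\alpha N$ (together with $\mathbf{0}$), and $\mathcal{D}_1$ is a power (norm) constraint. *)

theory Defs
  imports "HOL-Analysis.Analysis"
begin

text \<open>Vectors in C^N are modelled as complex ^ 'n with N = CARD('n);
  norm is the Euclidean 2-norm.\<close>

definition D1 :: "real \<Rightarrow> (complex ^ 'n) set" where
  "D1 P = {x. (norm x)\<^sup>2 \<le> P}"

definition D2 :: "real \<Rightarrow> (complex ^ 'n) set" where
  "D2 \<alpha> = {x. \<forall>i. (cmod (x $ i))\<^sup>2 \<le> \<alpha> * (norm x)\<^sup>2}"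

definition is_proj :: "'a::real_normed_vector \<Rightarrow> 'a set \<Rightarrow> 'a \<Rightarrow> bool" where
  "is_proj z S x \<longleftrightarrow> x \<in> S \<and> (\<forall>w\<in>S. norm (z - x) \<le> norm (z - w))"

end

theory Submission
  imports Defs
begin

text \<open>Only two features of the constraint sets matter: \<open>D2 \<alpha>\<close> is a cone and \<open>D1 P\<close> is the
  ball of radius \<open>\<surd>P\<close>. If \<open>p\<close> is a projection of \<open>z\<close> onto a cone \<open>K\<close>, then minimising
  \<open>\<parallel>z - t w\<parallel>\<close> over the ray \<open>t \<ge> 0\<close> through any \<open>w \<in> K\<close> shows
  \<open>\<langle>z, p\<rangle> = \<parallel>p\<parallel>\<^sup>2\<close> and \<open>\<langle>z, w\<rangle> \<le> \<parallel>w\<parallel> \<parallel>p\<parallel>\<close>. Hence for \<open>w \<in> K\<close> with \<open>\<parallel>w\<parallel> = r\<close> we get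
  \<open>\<parallel>z - w\<parallel>\<^sup>2 \<ge> \<parallel>z\<parallel>\<^sup>2 + r\<^sup>2 - 2 r \<parallel>p\<parallel>\<close>, with equality on the ray through \<open>p\<close>. On \<open>K \<inter> cball 0 R\<close>
  the bound is smallest for \<open>r = min \<parallel>p\<parallel> R\<close>, which is attained by rescaling \<open>p\<close>.\<close>

lemma power2_norm_diff:
  fixes x y :: "'a::real_inner"
  shows "(norm (x - y))\<^sup>2 = (norm x)\<^sup>2 + (norm y)\<^sup>2 - 2 * inner x y"
  by (simp add: power2_norm_eq_inner inner_diff inner_commute)

lemma is_proj_cone_inner_sq_le:
  fixes z p w :: "'a::real_inner"
  assumes "cone K" and "is_proj z K p" and "w \<in> K" and "0 \<le> inner z w"
  shows "(inner z w)\<^sup>2 \<le> (norm w)\<^sup>2 * (2 * inner z p - (norm p)\<^sup>2)"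
proof (cases "w = 0")
  case False
  define a where "a = inner z w"
  define r where "r = norm w"
  define t where "t = a / r\<^sup>2"
  have "r > 0" using False by (simp add: r_def)
  have "t *\<^sub>R w \<in> K"
    using assms by (simp add: mem_cone t_def a_def)
  then have "norm (z - p) \<le> norm (z - t *\<^sub>R w)"
    using assms(2) by (simp add: is_proj_def)
  then have "(norm (z - p))\<^sup>2 \<le> (norm (z - t *\<^sub>R w))\<^sup>2"
    by (simp add: power_mono)
  then have "(norm p)\<^sup>2 - 2 * inner z p \<le> t\<^sup>2 * r\<^sup>2 - 2 * t * a"
    by (simp add: power2_norm_diff power_mult_distrib a_def r_def)
  also have "\<dots> = - a\<^sup>2 / r\<^sup>2"
    using \<open>r > 0\<close> by (simp add: t_def field_simps power2_eq_square)
  finally show ?thesis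
    using \<open>r > 0\<close> by (simp add: a_def r_def field_simps)
qed simp

lemma is_proj_cone_inner_eq:
  fixes z p :: "'a::real_inner"
  assumes "cone K" and "is_proj z K p"
  shows "inner z p = (norm p)\<^sup>2"
proof -
  have "p \<in> K" using assms(2) by (simp add: is_proj_def)
  then have "0 \<in> K" using assms(1) cone_contains_0 by blast
  then have "norm (z - p) \<le> norm z"
    using assms(2) unfolding is_proj_def by (metis diff_zero)
  then have "(norm (z - p))\<^sup>2 \<le> (norm z)\<^sup>2"
    by (simp add: power_mono)
  then have "(norm p)\<^sup>2 \<le> 2 * inner z p"
    by (simp add: power2_norm_diff)
  then have "0 \<le> inner z p"
    using zero_le_power2[of "norm p"] by linarith
  then have "(inner z p)\<^sup>2 \<le> (norm p)\<^sup>2 * (2 * inner z p - (norm p)\<^sup>2)"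
    by (rule is_proj_cone_inner_sq_le[OF assms \<open>p \<in> K\<close>])
  then have "(inner z p - (norm p)\<^sup>2)\<^sup>2 \<le> 0"
    by (simp add: power2_eq_square algebra_simps)
  then show ?thesis by simp
qed

lemma is_proj_cone_inner_le:
  fixes z p w :: "'a::real_inner"
  assumes "cone K" and "is_proj z K p" and "w \<in> K"
  shows "inner z w \<le> norm w * norm p"
proof (cases "0 \<le> inner z w")
  case True
  have "(inner z w)\<^sup>2 \<le> (norm w * norm p)\<^sup>2"
    using is_proj_cone_inner_sq_le[OF assms True] is_proj_cone_inner_eq[OF assms(1,2)]
    by (simp add: power_mult_distrib)
  then show ?thesis by (rule power2_le_imp_le) simp
next
  case False
  have "0 \<le> norm w * norm p" by simp
  then show ?thesis using False by linarith
qed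

lemma min_sub_power2_le:
  fixes r s R :: real
  assumes "r \<le> R"
  shows "(min s R)\<^sup>2 - 2 * min s R * s \<le> r\<^sup>2 - 2 * r * s"
proof -
  have "(min s R - s)\<^sup>2 \<le> (r - s)\<^sup>2"
    using assms by (cases "s \<le> R") (simp_all add: power_mono abs_le_square_iff[symmetric])
  then show ?thesis by (simp add: power2_eq_square algebra_simps)
qed

lemma is_proj_cone_Int_cball:
  fixes z p :: "'a::real_inner"
  assumes "cone K" and "is_proj z K p" and "0 \<le> R"
  shows "is_proj z (K \<inter> cball 0 R) (min 1 (R / norm p) *\<^sub>R p)"
proof -
  define s where "s = norm p"
  define c where "c = min 1 (R / s)"
  have "c \<ge> 0" using assms(3) by (simp add: c_def s_def)
  have cs: "c * s = min s R"
  proof (cases "s = 0")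
    case False
    then have "s > 0" by (simp add: s_def)
    then show ?thesis by (auto simp: c_def min_def field_simps)
  qed (use assms(3) in \<open>simp add: s_def\<close>)
  then have norm_cp: "norm (c *\<^sub>R p) = min s R"
    using \<open>c \<ge> 0\<close> by (simp add: s_def)
  have "p \<in> K" using assms(2) by (simp add: is_proj_def)
  then have "c *\<^sub>R p \<in> K \<inter> cball 0 R"
    using assms(1) \<open>c \<ge> 0\<close> norm_cp by (simp add: mem_cone)
  moreover have "norm (z - c *\<^sub>R p) \<le> norm (z - w)" if "w \<in> K \<inter> cball 0 R" for w
  proof -
    have "inner z (c *\<^sub>R p) = c * s * s"
      using is_proj_cone_inner_eq[OF assms(1,2)] by (simp add: s_def power2_eq_square)
    then have "inner z (c *\<^sub>R p) = min s R * s"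
      by (simp add: cs)
    then have "(norm (z - c *\<^sub>R p))\<^sup>2 = (norm z)\<^sup>2 + (min s R)\<^sup>2 - 2 * min s R * s"
      by (simp only: power2_norm_diff norm_cp mult.assoc)
    also have "\<dots> \<le> (norm z)\<^sup>2 + (norm w)\<^sup>2 - 2 * norm w * s"
      using that min_sub_power2_le[of "norm w" R s] by simp
    also have "\<dots> \<le> (norm (z - w))\<^sup>2"
      using is_proj_cone_inner_le[OF assms(1,2)] that by (simp add: power2_norm_diff s_def)
    finally show ?thesis by (simp add: power2_le_iff_abs_le)
  qed
  ultimately show ?thesis by (simp add: is_proj_def c_def s_def)
qed

lemma cone_D2: "cone (D2 \<alpha>)"
  unfolding cone_def
proof (intro ballI allI impI)
  fix x :: "complex ^ 'n" and c :: real
  assume "x \<in> D2 \<alpha>" and "0 \<le> c"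
  have "(cmod ((c *\<^sub>R x) $ i))\<^sup>2 \<le> \<alpha> * (norm (c *\<^sub>R x))\<^sup>2" for i
  proof -
    have "(cmod (x $ i))\<^sup>2 \<le> \<alpha> * (norm x)\<^sup>2" using \<open>x \<in> D2 \<alpha>\<close> by (simp add: D2_def)
    then have "c\<^sup>2 * (cmod (x $ i))\<^sup>2 \<le> c\<^sup>2 * (\<alpha> * (norm x)\<^sup>2)" by (simp add: mult_left_mono)
    then show ?thesis by (simp add: power_mult_distrib mult.left_commute)
  qed
  then show "c *\<^sub>R x \<in> D2 \<alpha>" by (simp add: D2_def)
qed

lemma D1_eq_cball: "P \<ge> 0 \<Longrightarrow> D1 P = cball 0 (sqrt P)"
  unfolding D1_def by (auto simp: real_le_rsqrt) (metis norm_ge_zero real_sqrt_unique real_sqrt_le_iff)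

theorem mainTheorem1:
  fixes z x' :: "complex ^ 'n" and \<alpha> P :: real
  assumes "1 / real CARD('n) \<le> \<alpha>" and "\<alpha> \<le> 1" and "P > 0"
    and "is_proj z (D2 \<alpha>) x'"
  shows "is_proj z (D1 P \<inter> D2 \<alpha>)
           (if x' = 0 then x' else min 1 (sqrt P / norm x') *\<^sub>R x')"
proof -
  have x_eq: "(if x' = 0 then x' else min 1 (sqrt P / norm x') *\<^sub>R x')
      = min 1 (sqrt P / norm x') *\<^sub>R x'"
    by simp
  have D_eq: "D1 P \<inter> D2 \<alpha> = D2 \<alpha> \<inter> cball 0 (sqrt P)"
    using assms(3) by (simp add: D1_eq_cball Int_commute)
  show ?thesis
    unfolding x_eq D_eq using is_proj_cone_Int_cball[OF cone_D2 assms(4)] assms(3) by simp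
qed

end
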